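(* Let $X$ be an observation whose distribution $P_\theta$ depends on a parameter $\theta\in\Theta$. Let $N=\{1,\dots,n\}$ index a family of null hypotheses $H_1,\dots,H_n$, each $H_i\subseteq\Theta$, with elementary test functions $\phi_1,\dots,\phi_n$ (each a $\{0,1\}$-valued function of $X$, $\phi_i=1$ meaning $H_i$ is rejected) and rejection regions $R_i=\{\phi_i=1\}$ in the sample space. Let $0<\alpha<1$. Suppose $\emptyset\neq I\subset N$, $\emptyset\neq J\subset N$, $I\cap J=\emptyset$, and $\bigcup_{i\in I}R_i\subseteq\bigcup_{j\in J}R_j$. For each $j\in J$ let $\phi^j=\{\phi_i^j: i\in N\setminus\{j\}\}$ be a multiple test (a collection of elementary test functions indexed by $N\setminus\{j\}$), and let $\phi^I=\{\phi_i^I: i\in N\setminus I\}$ be a multiple test indexed by $N\setminus I$. Define elementary test functions $\psi_i$, $i\in N$, by $$\psi_i=\begin{cases}\min\Big(\min_{j\in J,\ j\neq i}\phi_i^j,\ \phi_i^I\Big), & i\in N\setminus I,\\[4pt] \min\Big(\min_{j\in J}\phi_i^j,\ \max_{j\in J}\psi_j\Big), & i\in I,\end{cases}$$ (which is well defined since $J\subseteq N\setminus I$). If $\phi^j\in\Phi_\alpha(N\setminus\{j\})$ for every $j\in J$ and $\phi^I\in\Phi_\alpha(N\setminus I)$, then $\{\psi_i:i\in N\}\in\Phi_\alpha(N)$.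
   Context: For elementary test functions, $\min_{i\in S}\phi_i$ equals $1$ if $\phi_i=1$ for all $i\in S$ and $0$ otherwise (with the convention that a minimum over the empty set equals $1$), and $\max_{i\in S}\phi_i$ equals $1$ if $\phi_i=1$ for some $i\in S$ and $0$ otherwise. For $\emptyset\neq S\subseteq N$, $\Phi_\alpha(S)$ denotes the set of all multiple tests $\{\phi_i:i\in S\}$ for the hypotheses $\{H_i:i\in S\}$ that strongly control the familywise error rate at level $\alpha$, i.e. for every $\theta\in\Theta$, $P_\theta(\phi_i=1\text{ for some } i\in S \text{ with }\theta\in H_i)\le\alpha$; equivalently, for every nonempty $S'\subseteq S$ and every $\theta\in\bigcap_{i\in S'}H_i$, $P_\theta(\max_{i\in S'}\phi_i=1)\le\alpha$. *)

theory Defs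
  imports "HOL-Probability.Probability"
begin

definition elementary_test :: "'x measure \<Rightarrow> ('x \<Rightarrow> real) \<Rightarrow> bool" where
  "elementary_test M f \<longleftrightarrow> f \<in> borel_measurable M \<and> (\<forall>x\<in>space M. f x \<in> {0, 1})"

definition min_over :: "'i set \<Rightarrow> ('i \<Rightarrow> real) \<Rightarrow> real" where
  "min_over S f = (if S = {} then 1 else Min (f ` S))"

definition max_over :: "'i set \<Rightarrow> ('i \<Rightarrow> real) \<Rightarrow> real" where
  "max_over S f = (if S = {} then 0 else Max (f ` S))"

definition fwer_controls ::
  "'x measure \<Rightarrow> ('p \<Rightarrow> 'x measure) \<Rightarrow> 'p set \<Rightarrow> (nat \<Rightarrow> 'p set) \<Rightarrow> real
    \<Rightarrow> nat set \<Rightarrow> (nat \<Rightarrow> 'x \<Rightarrow> real) \<Rightarrow> bool" where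
  "fwer_controls M P \<Theta> H \<alpha> S \<phi> \<longleftrightarrow>
     (\<forall>i\<in>S. elementary_test M (\<phi> i)) \<and>
     (\<forall>\<theta>\<in>\<Theta>. measure (P \<theta>) {x \<in> space M. \<exists>i\<in>S. \<theta> \<in> H i \<and> \<phi> i x = 1} \<le> \<alpha>)"

text \<open>The combined tests psi_i. phiJ j i is the test phi_i^j of the multiple
  test phi^j (meaningful for i in N - {j}); phiI i is phi_i^I (meaningful for i in N - I).\<close>
definition psi_base :: "nat set \<Rightarrow> (nat \<Rightarrow> nat \<Rightarrow> 'x \<Rightarrow> real) \<Rightarrow> (nat \<Rightarrow> 'x \<Rightarrow> real)
    \<Rightarrow> nat \<Rightarrow> 'x \<Rightarrow> real" where
  "psi_base J phiJ phiI i x = min (min_over (J - {i}) (\<lambda>j. phiJ j i x)) (phiI i x)"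

definition psi :: "nat set \<Rightarrow> nat set \<Rightarrow> (nat \<Rightarrow> nat \<Rightarrow> 'x \<Rightarrow> real) \<Rightarrow> (nat \<Rightarrow> 'x \<Rightarrow> real)
    \<Rightarrow> nat \<Rightarrow> 'x \<Rightarrow> real" where
  "psi I J phiJ phiI i x =
     (if i \<in> I then min (min_over J (\<lambda>j. phiJ j i x)) (max_over J (\<lambda>j. psi_base J phiJ phiI j x))
      else psi_base J phiJ phiI i x)"

end

theory Submission
  imports Defs
begin

text \<open>If some \<open>j \<in> J\<close> has \<open>\<theta> \<notin> H\<^sub>j\<close>, every true hypothesis \<open>H\<^sub>i\<close> rejected by
  \<open>\<psi>\<close> has \<open>i \<noteq> j\<close> and \<open>\<psi>\<^sub>i \<le> \<phi>\<^sub>i\<^sup>j\<close>, so it is also a false rejection of \<open>\<phi>\<^sup>j\<close>. Otherwise all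
  of \<open>J\<close> is true, and a false rejection by \<open>\<psi>\<close> forces \<open>\<phi>\<^sup>I\<close> to reject a true hypothesis:
  \<open>H\<^sub>i\<close> itself if \<open>i \<notin> I\<close>, and via \<open>max\<^sub>j \<psi>\<^sub>j\<close> some \<open>H\<^sub>j\<close> with \<open>j \<in> J\<close> if \<open>i \<in> I\<close>.
  Either way the familywise error event of \<open>\<psi>\<close> is contained in that of a multiple test
  which controls the FWER at level \<open>\<alpha>\<close>.\<close>

definition fwe_event :: "'x measure \<Rightarrow> (nat \<Rightarrow> 'p set) \<Rightarrow> 'p \<Rightarrow> nat set
    \<Rightarrow> (nat \<Rightarrow> 'x \<Rightarrow> real) \<Rightarrow> 'x set" where
  "fwe_event M H \<theta> S \<phi> = {x \<in> space M. \<exists>i\<in>S. \<theta> \<in> H i \<and> \<phi> i x = 1}"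

lemma min_over_le:
  assumes "finite S" "j \<in> S"
  shows "min_over S g \<le> g j"
  using assms by (auto simp: min_over_def)

lemma le_max_over_imp_ex:
  assumes "finite S" "0 < c" "c \<le> max_over S g"
  shows "\<exists>j\<in>S. c \<le> g j"
  using assms by (auto simp: max_over_def Max_ge_iff split: if_splits)

lemma min_over_in_01:
  assumes "finite S" "\<And>j. j \<in> S \<Longrightarrow> g j \<in> {0, 1}"
  shows "min_over S g \<in> {0, 1}"
proof (cases "S = {}")
  case False
  then obtain j where "j \<in> S" "Min (g ` S) = g j"
    using Min_in[of "g ` S"] assms(1) by blast
  then show ?thesis using assms(2) False by (simp add: min_over_def)
qed (simp add: min_over_def)

lemma max_over_in_01:
  assumes "finite S" "\<And>j. j \<in> S \<Longrightarrow> g j \<in> {0, 1}"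
  shows "max_over S g \<in> {0, 1}"
proof (cases "S = {}")
  case False
  then obtain j where "j \<in> S" "Max (g ` S) = g j"
    using Max_in[of "g ` S"] assms(1) by blast
  then show ?thesis using assms(2) False by (simp add: max_over_def)
qed (simp add: max_over_def)

lemma elementary_test_min:
  assumes "elementary_test M f" "elementary_test M g"
  shows "elementary_test M (\<lambda>x. min (f x) (g x))"
  using assms by (auto simp: elementary_test_def min_def)

lemma elementary_test_min_over:
  assumes "finite S" "\<And>j. j \<in> S \<Longrightarrow> elementary_test M (f j)"
  shows "elementary_test M (\<lambda>x. min_over S (\<lambda>j. f j x))"
  unfolding elementary_test_def
proof (intro conjI ballI)
  show "(\<lambda>x. min_over S (\<lambda>j. f j x)) \<in> borel_measurable M"
    using assms by (cases "S = {}")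
      (auto simp: min_over_def elementary_test_def intro!: borel_measurable_Min)
  fix x assume "x \<in> space M"
  then show "min_over S (\<lambda>j. f j x) \<in> {0, 1}"
    using assms by (intro min_over_in_01) (auto simp: elementary_test_def)
qed

lemma elementary_test_max_over:
  assumes "finite S" "\<And>j. j \<in> S \<Longrightarrow> elementary_test M (f j)"
  shows "elementary_test M (\<lambda>x. max_over S (\<lambda>j. f j x))"
  unfolding elementary_test_def
proof (intro conjI ballI)
  show "(\<lambda>x. max_over S (\<lambda>j. f j x)) \<in> borel_measurable M"
    using assms by (cases "S = {}")
      (auto simp: max_over_def elementary_test_def intro!: borel_measurable_Max)
  fix x assume "x \<in> space M"
  then show "max_over S (\<lambda>j. f j x) \<in> {0, 1}"
    using assms by (intro max_over_in_01) (auto simp: elementary_test_def)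
qed

lemma elementary_test_eq_1_if_ge_1:
  assumes "elementary_test M f" "x \<in> space M" "1 \<le> f x"
  shows "f x = 1"
  using assms by (auto simp: elementary_test_def)

lemma fwe_event_in_sets:
  assumes "finite S" "\<And>i. i \<in> S \<Longrightarrow> elementary_test M (\<phi> i)"
  shows "fwe_event M H \<theta> S \<phi> \<in> sets M"
proof -
  have "fwe_event M H \<theta> S \<phi> = (\<Union>i\<in>{i\<in>S. \<theta> \<in> H i}. {x \<in> space M. \<phi> i x = 1})"
    by (auto simp: fwe_event_def)
  also have "\<dots> \<in> sets M"
  proof (rule sets.finite_UN)
    fix i assume "i \<in> {i\<in>S. \<theta> \<in> H i}"
    then have [measurable]: "\<phi> i \<in> borel_measurable M"
      using assms(2) by (auto simp: elementary_test_def)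
    show "{x \<in> space M. \<phi> i x = 1} \<in> sets M" by measurable
  qed (use assms(1) in auto)
  finally show ?thesis .
qed

lemma fwer_controls_if_fwe_event_dominated:
  assumes P: "\<And>\<theta>. \<theta> \<in> \<Theta> \<Longrightarrow> prob_space (P \<theta>) \<and> sets (P \<theta>) = sets M"
    and tests: "\<And>i. i \<in> T \<Longrightarrow> elementary_test M (\<psi> i)"
    and dominated: "\<And>\<theta>. \<theta> \<in> \<Theta> \<Longrightarrow> \<exists>S \<phi>. finite S \<and> fwer_controls M P \<Theta> H \<alpha> S \<phi>
        \<and> fwe_event M H \<theta> T \<psi> \<subseteq> fwe_event M H \<theta> S \<phi>"
  shows "fwer_controls M P \<Theta> H \<alpha> T \<psi>"
  unfolding fwer_controls_def
proof safe
  fix \<theta> assume \<theta>: "\<theta> \<in> \<Theta>"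
  then interpret prob_space "P \<theta>" using P by blast
  obtain S \<phi> where S: "finite S" and \<phi>: "fwer_controls M P \<Theta> H \<alpha> S \<phi>"
    and sub: "fwe_event M H \<theta> T \<psi> \<subseteq> fwe_event M H \<theta> S \<phi>"
    using dominated[OF \<theta>] by blast
  have "fwe_event M H \<theta> S \<phi> \<in> sets M"
    using \<phi> by (intro fwe_event_in_sets[OF S]) (auto simp: fwer_controls_def)
  then have "fwe_event M H \<theta> S \<phi> \<in> sets (P \<theta>)"
    using P[OF \<theta>] by simp
  then have "measure (P \<theta>) (fwe_event M H \<theta> T \<psi>) \<le> measure (P \<theta>) (fwe_event M H \<theta> S \<phi>)"
    by (rule finite_measure_mono[OF sub])
  also have "\<dots> \<le> \<alpha>"
    using \<phi> \<theta> by (simp add: fwer_controls_def fwe_event_def)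
  finally show "measure (P \<theta>) {x \<in> space M. \<exists>i\<in>T. \<theta> \<in> H i \<and> \<psi> i x = 1} \<le> \<alpha>"
    by (simp add: fwe_event_def)
qed (use tests in auto)

lemma psi_le_phiJ:
  assumes "finite J" "j \<in> J" "i \<noteq> j"
  shows "psi I J phiJ phiI i x \<le> phiJ j i x"
proof -
  have "min_over J (\<lambda>j. phiJ j i x) \<le> phiJ j i x"
    "min_over (J - {i}) (\<lambda>j. phiJ j i x) \<le> phiJ j i x"
    using assms by (auto intro: min_over_le)
  then show ?thesis by (auto simp: psi_def psi_base_def)
qed

lemma psi_ge_1_imp_phiI_ge_1:
  assumes "finite J" "1 \<le> psi I J phiJ phiI i x"
  obtains "i \<notin> I" "1 \<le> phiI i x" | j where "i \<in> I" "j \<in> J" "1 \<le> phiI j x"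
proof (cases "i \<in> I")
  case True
  then have "1 \<le> max_over J (\<lambda>j. psi_base J phiJ phiI j x)"
    using assms(2) by (simp add: psi_def)
  then obtain j where "j \<in> J" "1 \<le> psi_base J phiJ phiI j x"
    using le_max_over_imp_ex[OF assms(1) zero_less_one] by blast
  then show ?thesis using that True by (simp add: psi_base_def)
next
  case False
  then show ?thesis using that assms(2) by (simp add: psi_def psi_base_def)
qed

locale combined_test =
  fixes M :: "'x measure" and N I J :: "nat set"
    and phiJ :: "nat \<Rightarrow> nat \<Rightarrow> 'x \<Rightarrow> real" and phiI :: "nat \<Rightarrow> 'x \<Rightarrow> real"
  assumes finite_J: "finite J" and J_sub: "J \<subseteq> N - I"
    and tests_phiJ: "\<And>j i. j \<in> J \<Longrightarrow> i \<in> N - {j} \<Longrightarrow> elementary_test M (phiJ j i)"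
    and tests_phiI: "\<And>i. i \<in> N - I \<Longrightarrow> elementary_test M (phiI i)"
begin

lemma elementary_test_psi_base:
  assumes "i \<in> N - I"
  shows "elementary_test M (psi_base J phiJ phiI i)"
  unfolding psi_base_def using assms finite_J tests_phiJ tests_phiI
  by (intro elementary_test_min elementary_test_min_over) auto

lemma elementary_test_psi:
  assumes "i \<in> N"
  shows "elementary_test M (psi I J phiJ phiI i)"
proof (cases "i \<in> I")
  case True
  have "elementary_test M (\<lambda>x. min (min_over J (\<lambda>j. phiJ j i x))
          (max_over J (\<lambda>j. psi_base J phiJ phiI j x)))"
    using True assms finite_J J_sub tests_phiJ elementary_test_psi_base
    by (intro elementary_test_min elementary_test_min_over elementary_test_max_over) auto
  moreover have "psi I J phiJ phiI i = (\<lambda>x. min (min_over J (\<lambda>j. phiJ j i x))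
          (max_over J (\<lambda>j. psi_base J phiJ phiI j x)))"
    using True by (simp add: psi_def fun_eq_iff)
  ultimately show ?thesis by simp
next
  case False
  then show ?thesis
    using assms elementary_test_psi_base by (simp add: psi_def[abs_def])
qed

lemma fwe_event_psi_subset_phiJ:
  assumes "j \<in> J" "\<theta> \<notin> H j"
  shows "fwe_event M H \<theta> N (psi I J phiJ phiI) \<subseteq> fwe_event M H \<theta> (N - {j}) (phiJ j)"
proof
  fix x assume "x \<in> fwe_event M H \<theta> N (psi I J phiJ phiI)"
  then obtain i where x: "x \<in> space M" and i: "i \<in> N" "\<theta> \<in> H i"
    and rejected: "psi I J phiJ phiI i x = 1"
    by (auto simp: fwe_event_def)
  have "i \<noteq> j" using assms i by auto
  then have "1 \<le> phiJ j i x"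
    using psi_le_phiJ[OF finite_J assms(1) \<open>i \<noteq> j\<close>, of I phiJ phiI x] rejected by simp
  moreover have "elementary_test M (phiJ j i)"
    using tests_phiJ assms(1) i \<open>i \<noteq> j\<close> by simp
  ultimately have "phiJ j i x = 1"
    using x by (simp add: elementary_test_eq_1_if_ge_1)
  then show "x \<in> fwe_event M H \<theta> (N - {j}) (phiJ j)"
    using x i \<open>i \<noteq> j\<close> by (auto simp: fwe_event_def)
qed

lemma fwe_event_psi_subset_phiI:
  assumes "\<And>j. j \<in> J \<Longrightarrow> \<theta> \<in> H j"
  shows "fwe_event M H \<theta> N (psi I J phiJ phiI) \<subseteq> fwe_event M H \<theta> (N - I) phiI"
proof
  fix x assume "x \<in> fwe_event M H \<theta> N (psi I J phiJ phiI)"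
  then obtain i where x: "x \<in> space M" and i: "i \<in> N" "\<theta> \<in> H i"
    and rejected: "1 \<le> psi I J phiJ phiI i x"
    by (auto simp: fwe_event_def)
  obtain k where k: "k \<in> N - I" "\<theta> \<in> H k" and "1 \<le> phiI k x"
    using psi_ge_1_imp_phiI_ge_1[OF finite_J rejected]
  proof cases
    case 1
    then show ?thesis using that i by blast
  next
    case (2 j)
    then show ?thesis using that J_sub assms by blast
  qed
  then have "phiI k x = 1"
    using elementary_test_eq_1_if_ge_1[OF tests_phiI[OF k(1)] x] by simp
  then show "x \<in> fwe_event M H \<theta> (N - I) phiI"
    using x k by (auto simp: fwe_event_def)
qed

end

theorem theorem1:
  fixes M :: "'x measure" and P :: "'p \<Rightarrow> 'x measure" and \<Theta> :: "'p set"
    and H :: "nat \<Rightarrow> 'p set" and n :: nat and \<alpha> :: real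
    and \<phi> :: "nat \<Rightarrow> 'x \<Rightarrow> real"
    and I J :: "nat set"
    and phiJ :: "nat \<Rightarrow> nat \<Rightarrow> 'x \<Rightarrow> real" and phiI :: "nat \<Rightarrow> 'x \<Rightarrow> real"
  assumes P: "\<And>\<theta>. \<theta> \<in> \<Theta> \<Longrightarrow> prob_space (P \<theta>) \<and> sets (P \<theta>) = sets M"
    and H: "\<And>i. i \<in> {1..n} \<Longrightarrow> H i \<subseteq> \<Theta>"
    and tests: "\<And>i. i \<in> {1..n} \<Longrightarrow> elementary_test M (\<phi> i)"
    and alpha: "0 < \<alpha>" "\<alpha> < 1"
    and I: "I \<noteq> {}" "I \<subset> {1..n}"
    and J: "J \<noteq> {}" "J \<subset> {1..n}"
    and disj: "I \<inter> J = {}"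
    and regions: "(\<Union>i\<in>I. {x \<in> space M. \<phi> i x = 1}) \<subseteq> (\<Union>j\<in>J. {x \<in> space M. \<phi> j x = 1})"
    and phiJ: "\<And>j. j \<in> J \<Longrightarrow> fwer_controls M P \<Theta> H \<alpha> ({1..n} - {j}) (phiJ j)"
    and phiI: "fwer_controls M P \<Theta> H \<alpha> ({1..n} - I) phiI"
  shows "fwer_controls M P \<Theta> H \<alpha> {1..n} (psi I J phiJ phiI)"
proof -
  have finite_J: "finite J" and J_sub: "J \<subseteq> {1..n} - I"
    using J disj finite_subset[of J "{1..n}"] by auto
  have tests_phiJ: "\<And>j i. j \<in> J \<Longrightarrow> i \<in> {1..n} - {j} \<Longrightarrow> elementary_test M (phiJ j i)"
    using phiJ unfolding fwer_controls_def by blast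
  have tests_phiI: "\<And>i. i \<in> {1..n} - I \<Longrightarrow> elementary_test M (phiI i)"
    using phiI unfolding fwer_controls_def by blast
  interpret combined_test M "{1..n}" I J phiJ phiI
    using finite_J J_sub tests_phiJ tests_phiI by unfold_locales
  show ?thesis
  proof (rule fwer_controls_if_fwe_event_dominated)
    fix \<theta> assume "\<theta> \<in> \<Theta>"
    show "\<exists>S \<phi>. finite S \<and> fwer_controls M P \<Theta> H \<alpha> S \<phi>
        \<and> fwe_event M H \<theta> {1..n} (psi I J phiJ phiI) \<subseteq> fwe_event M H \<theta> S \<phi>"
    proof (cases "\<exists>j\<in>J. \<theta> \<notin> H j")
      case True
      then obtain j where j: "j \<in> J" "\<theta> \<notin> H j" by blast
      show ?thesis
        using phiJ[OF j(1)] fwe_event_psi_subset_phiJ[where H = H, OF j]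
        by (intro exI[of _ "{1..n} - {j}"] exI[of _ "phiJ j"]) simp
    next
      case False
      then show ?thesis
        using phiI fwe_event_psi_subset_phiI[where H = H]
        by (intro exI[of _ "{1..n} - I"] exI[of _ phiI]) simp
    qed
  qed (use P elementary_test_psi in auto)
qed

end
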